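(* Let $m = p + 12k$ with $k \geq 0$ an integer and $p \in \{11,13,17,19\}$. Suppose $(W, X, Y, Z, P^0_0, P^1_0, Q^0_0, Q^1_0)$ is a type-2 basic set of dipaths of $G_{2m}$. For $i \in \{0,1\}$ and $j \in \{1,\dots,k-1\}$ let $P^i_j = \rho^{12j}(P^i_0)$ and $Q^i_j = \rho^{12j}(Q^i_0)$. Then the concatenations $C^0 = W P^0_0 P^0_1 \cdots P^0_{k-1} X P^1_0 P^1_1 \cdots P^1_{k-1}$ and $C^1 = Y Q^0_0 Q^0_1 \cdots Q^0_{k-1} Z Q^1_0 Q^1_1 \cdots Q^1_{k-1}$ are type-2 directed $m$-cycles of $G_{2m}$, and $C^0 \cup C^1$ is a $\vec{C}_m$-factor of $G_{2m}$.
   Context: Let $m$ be odd. $G_{2m} = \vec{X}(m,\{1,3\}) \wr K^*_2$ is the digraph with vertex set $\{x_a, y_a : a \in \mathbb{Z}_m\}$ whose arcs are: $(u_a, v_b)$ for all $u,v \in \{x,y\}$ and $a,b$ with $b-a \equiv 1$ or $3 \pmod m$, together with $(x_a,y_a)$ and $(y_a,x_a)$ for all $a$. An arc from a vertex with subscript $a$ to a vertex with subscript $b$ has difference equal to the representative of $b-a$ in $\{0,1,\dots,m-1\}$. A type-$k$ cycle is a directed $m$-cycle whose arc differences sum (as integers) to $km$. The map $\rho$ sends $x_i \mapsto x_{i+1}$, $y_i \mapsto y_{i+1}$ (subscripts mod $m$), applied vertexwise to dipaths. For a dipath $P$: $s(P)$ is its first vertex, $t(P)$ its last vertex, $\mathrm{len}(P)$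 its number of arcs (a dipath of length $0$ is a single vertex); $PQ$ denotes concatenation when $t(P)=s(Q)$. With $m = p+12k$, set $V_0 = \{x_j, y_j : 0 \le j \le p-1\}$ and, for $1 \le i \le k$, $V_i = \{x_j, y_j : p+12(i-1) \le j \le p+12i-1\}$. An 8-tuple $(W,X,Y,Z,Q,R,S,T)$ of dipaths of $G_{2m}$ is a type-2 basic set of dipaths if: (C1) $Q,R,S,T$ are pairwise vertex-disjoint; if $k\ge1$ then $W,X,Y,Z$ are pairwise vertex-disjoint, while if $k=0$ then $WX$ and $YZ$ are vertex-disjoint type-2 directed cycles; (C2) $s(X)=\rho^{-p}(t(W))$, $s(W)=\rho^{-p}(t(X))$, $s(Z)=\rho^{-p}(t(Y))$, $s(Y)=\rho^{-p}(t(Z))$; (C3) $\mathrm{len}(W)+\mathrm{len}(X)=\mathrm{len}(Y)+\mathrm{len}(Z)=p$; if $k\ge1$ then $\mathrm{len}(Q)+\mathrm{len}(R)=\mathrm{len}(S)+\mathrm{len}(T)=12$, and if $k=0$ then $Q,R,S,T$ all have length $0$; (C4) each of $W,X,Y,Z$ has its source and internal vertices in $V_0$ and its terminal vertex equal to $x_t$ or $y_t$ for some $t\in\{p,p+1,p+2\}$; (C5) $t(W)=s(Q)$, $t(X)=s(R)$, $t(Y)=s(S)$, $t(Z)=s(T)$; (C6) if $k\ge1$ and $P\in\{Q,R,S,T\}$ has $s(P)=x_t$ (resp. $y_t$), then $t(P)=x_{t+12}$ (resp. $y_{t+12}$), and all internal vertices of $P$ lie in $V_1$. A $\vec{C}_m$-factor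 is a spanning subdigraph that is a disjoint union of directed $m$-cycles. *)

theory Defs
  imports Main
begin

text \<open>Vertices of G_{2m}: (False, a) is x_a and (True, a) is y_a, with 0 <= a < m.
  Dipaths and cycles are represented as vertex lists.\<close>

type_synonym vert = "bool \<times> nat"

definition verts :: "nat \<Rightarrow> vert set" where
  "verts m = {v. snd v < m}"

definition adiff :: "nat \<Rightarrow> vert \<Rightarrow> vert \<Rightarrow> nat" where
  "adiff m u v = (snd v + m - snd u) mod m"

definition arc :: "nat \<Rightarrow> vert \<Rightarrow> vert \<Rightarrow> bool" where
  "arc m u v \<longleftrightarrow> u \<in> verts m \<and> v \<in> verts m \<and>
     (adiff m u v = 1 mod m \<or> adiff m u v = 3 mod m \<or>
      (snd u = snd v \<and> fst u \<noteq> fst v))"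

definition rho :: "nat \<Rightarrow> int \<Rightarrow> vert \<Rightarrow> vert" where
  "rho m n v = (fst v, nat ((int (snd v) + n) mod int m))"

definition rhoP :: "nat \<Rightarrow> int \<Rightarrow> vert list \<Rightarrow> vert list" where
  "rhoP m n P = map (rho m n) P"

definition dipath :: "nat \<Rightarrow> vert list \<Rightarrow> bool" where
  "dipath m P \<longleftrightarrow> P \<noteq> [] \<and> distinct P \<and> set P \<subseteq> verts m \<and>
     (\<forall>i. Suc i < length P \<longrightarrow> arc m (P ! i) (P ! Suc i))"

definition plen :: "vert list \<Rightarrow> nat" where
  "plen P = length P - 1"

definition dicycle :: "nat \<Rightarrow> vert list \<Rightarrow> bool" where
  "dicycle m C \<longleftrightarrow> length C = m \<and> distinct C \<and> set C \<subseteq> verts m \<and>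
     (\<forall>i<m. arc m (C ! i) (C ! ((i + 1) mod m)))"

definition type_cycle :: "nat \<Rightarrow> nat \<Rightarrow> vert list \<Rightarrow> bool" where
  "type_cycle m k C \<longleftrightarrow> dicycle m C \<and>
     (\<Sum>i<m. adiff m (C ! i) (C ! ((i + 1) mod m))) = k * m"

definition closed_type_cycle :: "nat \<Rightarrow> nat \<Rightarrow> vert list \<Rightarrow> bool" where
  "closed_type_cycle m k W \<longleftrightarrow> W \<noteq> [] \<and> last W = hd W \<and> type_cycle m k (butlast W)"

definition chain :: "vert list list \<Rightarrow> bool" where
  "chain Ps \<longleftrightarrow> (\<forall>i. Suc i < length Ps \<longrightarrow> last (Ps ! i) = hd (Ps ! Suc i))"

fun concat_walk :: "vert list list \<Rightarrow> vert list" where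
  "concat_walk [] = []"
| "concat_walk (P # Ps) = P @ concat (map tl Ps)"

definition V0 :: "nat \<Rightarrow> vert set" where
  "V0 p = {v. snd v < p}"

definition Vi :: "nat \<Rightarrow> nat \<Rightarrow> vert set" where
  "Vi p i = {v. p + 12 * (i - 1) \<le> snd v \<and> snd v \<le> p + 12 * i - 1}"

definition C4 :: "nat \<Rightarrow> nat \<Rightarrow> vert list \<Rightarrow> bool" where
  "C4 m p P \<longleftrightarrow> hd P \<in> V0 p \<and> set (butlast P) \<subseteq> V0 p \<and>
     snd (last P) \<in> {p mod m, (p + 1) mod m, (p + 2) mod m}"

definition C6 :: "nat \<Rightarrow> nat \<Rightarrow> vert list \<Rightarrow> bool" where
  "C6 m p P \<longleftrightarrow> last P = rho m 12 (hd P) \<and> set (butlast (tl P)) \<subseteq> Vi p 1"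

definition disj4 :: "vert list \<Rightarrow> vert list \<Rightarrow> vert list \<Rightarrow> vert list \<Rightarrow> bool" where
  "disj4 A B C D \<longleftrightarrow> set A \<inter> set B = {} \<and> set A \<inter> set C = {} \<and> set A \<inter> set D = {} \<and>
     set B \<inter> set C = {} \<and> set B \<inter> set D = {} \<and> set C \<inter> set D = {}"

definition type2_basic :: "nat \<Rightarrow> nat \<Rightarrow> nat \<Rightarrow>
    vert list \<Rightarrow> vert list \<Rightarrow> vert list \<Rightarrow> vert list \<Rightarrow>
    vert list \<Rightarrow> vert list \<Rightarrow> vert list \<Rightarrow> vert list \<Rightarrow> bool" where
  "type2_basic m p k W X Y Z Q R S T \<longleftrightarrow>
     (\<forall>P\<in>{W, X, Y, Z, Q, R, S, T}. dipath m P) \<and>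
     \<comment> \<open>C1\<close>
     disj4 Q R S T \<and>
     (k \<ge> 1 \<longrightarrow> disj4 W X Y Z) \<and>
     (k = 0 \<longrightarrow> closed_type_cycle m 2 (W @ tl X) \<and> closed_type_cycle m 2 (Y @ tl Z) \<and>
                set (W @ tl X) \<inter> set (Y @ tl Z) = {}) \<and>
     \<comment> \<open>C2\<close>
     hd X = rho m (- int p) (last W) \<and> hd W = rho m (- int p) (last X) \<and>
     hd Z = rho m (- int p) (last Y) \<and> hd Y = rho m (- int p) (last Z) \<and>
     \<comment> \<open>C3\<close>
     plen W + plen X = p \<and> plen Y + plen Z = p \<and>
     (k \<ge> 1 \<longrightarrow> plen Q + plen R = 12 \<and> plen S + plen T = 12) \<and>
     (k = 0 \<longrightarrow> plen Q = 0 \<and> plen R = 0 \<and> plen S = 0 \<and> plen T = 0) \<and>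
     \<comment> \<open>C4\<close>
     C4 m p W \<and> C4 m p X \<and> C4 m p Y \<and> C4 m p Z \<and>
     \<comment> \<open>C5\<close>
     last W = hd Q \<and> last X = hd R \<and> last Y = hd S \<and> last Z = hd T \<and>
     \<comment> \<open>C6\<close>
     (k \<ge> 1 \<longrightarrow> C6 m p Q \<and> C6 m p R \<and> C6 m p S \<and> C6 m p T)"

definition Cm_factor :: "nat \<Rightarrow> vert list list \<Rightarrow> bool" where
  "Cm_factor m Cs \<longleftrightarrow> (\<forall>C\<in>set Cs. dicycle m C) \<and>
     (\<forall>i j. i < length Cs \<longrightarrow> j < length Cs \<longrightarrow> i \<noteq> j \<longrightarrow> set (Cs ! i) \<inter> set (Cs ! j) = {}) \<and>
     (\<Union>C\<in>set Cs. set C) = verts m"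

end

theory Submission imports Defs begin

text \<open>Apart from their last vertices, \<open>W\<close> and \<open>X\<close> lie in
  \<open>V\<^sub>0 = [0, p)\<close>, while the \<open>j\<close>-th translate lies in the band \<open>[p + 12j, p + 12j + 11]\<close>; this makes
  the vertices of \<open>C\<^sup>0\<close> distinct and disjoint from those of \<open>C\<^sup>1\<close>, and counting them gives
  \<open>p + 12k = m\<close>. The last translate ends at the start of the first one shifted by \<open>12k \<equiv> -p\<close>,
  which by (C2) is where the next piece begins, so the walk closes up. Since arc differences are at
  most 3, a walk that stays away from the wrap-around point has weight equal to its displacement:
  each translate has weight 12 and \<open>W\<close>, \<open>X\<close> together have weight \<open>2p\<close>, so the cycle has type
  \<open>(2p + 24k) / m = 2\<close>.\<close>

fun is_walk :: "nat \<Rightarrow> vert list \<Rightarrow> bool" where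
  "is_walk m (u # v # P) \<longleftrightarrow> arc m u v \<and> is_walk m (v # P)"
| "is_walk m _ \<longleftrightarrow> True"

fun walk_weight :: "nat \<Rightarrow> vert list \<Rightarrow> nat" where
  "walk_weight m (u # v # P) = adiff m u v + walk_weight m (v # P)"
| "walk_weight m _ = 0"

lemma is_walk_iff_nth:
  "is_walk m P \<longleftrightarrow> (\<forall>i. Suc i < length P \<longrightarrow> arc m (P ! i) (P ! Suc i))"
proof (induction m P rule: is_walk.induct)
  case (1 m u v P)
  then show ?case by (auto simp: nth_Cons split: nat.splits)
qed auto

lemma walk_weight_eq_sum:
  "walk_weight m P = (\<Sum>i<length P - 1. adiff m (P ! i) (P ! Suc i))"
  by (induction m P rule: walk_weight.induct) (simp_all add: sum.lessThan_Suc_shift del: sum.lessThan_Suc)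

lemma is_walk_append_tl:
  "A \<noteq> [] \<Longrightarrow> last A = hd B \<Longrightarrow> is_walk m (A @ tl B) \<longleftrightarrow> is_walk m A \<and> is_walk m B"
  by (induction A rule: induct_list012) (cases B; auto)+

lemma walk_weight_append_tl:
  "A \<noteq> [] \<Longrightarrow> last A = hd B \<Longrightarrow> walk_weight m (A @ tl B) = walk_weight m A + walk_weight m B"
  by (induction A rule: induct_list012) (cases B; auto)+

lemma dipath_iff_walk:
  "dipath m P \<longleftrightarrow> P \<noteq> [] \<and> distinct P \<and> set P \<subseteq> verts m \<and> is_walk m P"
  by (simp add: dipath_def is_walk_iff_nth)

lemma chain_Nil [simp]: "chain []"
  by (simp add: chain_def)

lemma chain_Cons: "chain (P # Ps) \<longleftrightarrow> chain Ps \<and> (Ps \<noteq> [] \<longrightarrow> last P = hd (hd Ps))"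
  unfolding chain_def by (cases Ps) (auto simp: nth_Cons split: nat.splits)

lemma chain_append:
  "chain (Ps @ Qs) \<longleftrightarrow> chain Ps \<and> chain Qs \<and>
     (Ps \<noteq> [] \<longrightarrow> Qs \<noteq> [] \<longrightarrow> last (last Ps) = hd (hd Qs))"
  by (induction Ps) (auto simp: chain_Cons)

lemma concat_walk_Cons_Cons: "Q \<noteq> [] \<Longrightarrow> concat_walk (P # Q # Ps) = P @ tl (concat_walk (Q # Ps))"
  by simp

lemma set_concat_walk_subset: "set (concat_walk Ps) \<subseteq> \<Union> (set ` set Ps)"
proof (cases Ps)
  case (Cons P Qs)
  have "set (tl Q) \<subseteq> set Q" for Q :: "vert list"
    by (cases Q) auto
  then show ?thesis using Cons by fastforce
qed simp

lemma concat_walk_eq_butlasts: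
  "chain Ps \<Longrightarrow> [] \<notin> set Ps \<Longrightarrow> Ps \<noteq> [] \<Longrightarrow>
     concat_walk Ps = concat (map butlast Ps) @ [last (last Ps)]"
proof (induction Ps rule: induct_list012)
  case (3 P Q Ps)
  have P: "P \<noteq> []" and Q: "Q \<noteq> []" and PQ: "last P = hd Q"
    using "3.prems" by (auto simp: chain_Cons)
  have "concat_walk (P # Q # Ps) = (butlast P @ [last P]) @ tl (concat_walk (Q # Ps))"
    using P Q by simp
  also have "\<dots> = butlast P @ concat_walk (Q # Ps)"
    using Q PQ by (cases Q) simp_all
  also have "concat_walk (Q # Ps) = concat (map butlast (Q # Ps)) @ [last (last (Q # Ps))]"
    using 3 by (simp add: chain_Cons del: concat_walk.simps)
  finally show ?case by simp
qed simp_all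

lemma is_walk_concat_walk:
  "chain Ps \<Longrightarrow> [] \<notin> set Ps \<Longrightarrow> is_walk m (concat_walk Ps) \<longleftrightarrow> (\<forall>P\<in>set Ps. is_walk m P)"
proof (induction Ps rule: induct_list012)
  case (3 P Q Ps)
  have P: "P \<noteq> []" and Q: "Q \<noteq> []" and PQ: "last P = hd (concat_walk (Q # Ps))"
    using "3.prems" by (auto simp: chain_Cons)
  have "is_walk m (concat_walk (P # Q # Ps)) \<longleftrightarrow> is_walk m P \<and> is_walk m (concat_walk (Q # Ps))"
    using is_walk_append_tl[OF P PQ] concat_walk_Cons_Cons[OF Q] by simp
  then show ?case using 3 by (simp add: chain_Cons)
qed simp_all

lemma walk_weight_concat_walk:
  "chain Ps \<Longrightarrow> [] \<notin> set Ps \<Longrightarrow> walk_weight m (concat_walk Ps) = sum_list (map (walk_weight m) Ps)"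
proof (induction Ps rule: induct_list012)
  case (3 P Q Ps)
  have P: "P \<noteq> []" and Q: "Q \<noteq> []" and PQ: "last P = hd (concat_walk (Q # Ps))"
    using "3.prems" by (auto simp: chain_Cons)
  have "walk_weight m (concat_walk (P # Q # Ps)) = walk_weight m P + walk_weight m (concat_walk (Q # Ps))"
    using walk_weight_append_tl[OF P PQ] concat_walk_Cons_Cons[OF Q] by simp
  then show ?case using 3 by (simp add: chain_Cons)
qed simp_all

lemma rho_in_verts: "0 < m \<Longrightarrow> rho m n v \<in> verts m"
  by (simp add: verts_def rho_def nat_less_iff)

lemma rho_add: "0 < m \<Longrightarrow> rho m a (rho m b v) = rho m (a + b) v"
  by (simp add: rho_def mod_add_right_eq algebra_simps)

lemma rho_mod_cong: "a mod int m = b mod int m \<Longrightarrow> rho m a v = rho m b v"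
  by (simp add: rho_def) (metis mod_add_right_eq)

lemma rho_zero: "v \<in> verts m \<Longrightarrow> rho m 0 v = v"
  by (simp add: rho_def verts_def)

lemma snd_rho_no_wrap:
  "0 \<le> int (snd v) + n \<Longrightarrow> int (snd v) + n < int m \<Longrightarrow> snd (rho m n v) = nat (int (snd v) + n)"
  by (simp add: rho_def)

lemma int_adiff: "snd u \<le> m \<Longrightarrow> int (adiff m u v) = (int (snd v) - int (snd u)) mod int m"
proof -
  assume "snd u \<le> m"
  then have "int (snd v + m - snd u) = (int (snd v) - int (snd u)) + int m"
    by simp
  then show ?thesis
    by (simp add: adiff_def of_nat_mod)
qed

lemma adiff_rho: "0 < m \<Longrightarrow> u \<in> verts m \<Longrightarrow> adiff m (rho m n u) (rho m n v) = adiff m u v"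
proof -
  assume m: "0 < m" and u: "u \<in> verts m"
  have "snd (rho m n u) \<le> m"
    using rho_in_verts[OF m] by (simp add: verts_def less_imp_le)
  then have "int (adiff m (rho m n u) (rho m n v))
      = ((int (snd v) + n) mod int m - (int (snd u) + n) mod int m) mod int m"
    using m by (simp add: int_adiff rho_def)
  also have "\<dots> = int (adiff m u v)"
    using u by (simp add: int_adiff verts_def mod_diff_eq)
  finally show ?thesis by simp
qed

lemma arc_rho: "0 < m \<Longrightarrow> arc m u v \<Longrightarrow> arc m (rho m n u) (rho m n v)"
  using adiff_rho[of m u n v] rho_in_verts[of m n] by (auto simp: arc_def rho_def)

lemma hd_rhoP [simp]: "P \<noteq> [] \<Longrightarrow> hd (rhoP m n P) = rho m n (hd P)"
  and last_rhoP [simp]: "P \<noteq> [] \<Longrightarrow> last (rhoP m n P) = rho m n (last P)"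
  and butlast_rhoP [simp]: "butlast (rhoP m n P) = rhoP m n (butlast P)"
  and set_rhoP [simp]: "set (rhoP m n P) = rho m n ` set P"
  and rhoP_eq_Nil_iff [simp]: "rhoP m n P = [] \<longleftrightarrow> P = []"
  by (simp_all add: rhoP_def hd_map last_map map_butlast)

lemma is_walk_rhoP: "0 < m \<Longrightarrow> is_walk m P \<Longrightarrow> is_walk m (rhoP m n P)"
  by (induction m P rule: is_walk.induct) (auto simp: rhoP_def arc_rho)

lemma walk_weight_rhoP: "0 < m \<Longrightarrow> set P \<subseteq> verts m \<Longrightarrow> walk_weight m (rhoP m n P) = walk_weight m P"
  by (induction m P rule: walk_weight.induct) (auto simp: rhoP_def adiff_rho)

lemma snd_arc_no_wrap:
  assumes m: "3 < m" and a: "arc m u v" and u: "snd u + 3 < m"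
  shows "snd v = snd u + adiff m u v"
proof -
  have v: "snd v < m" using a by (simp add: arc_def verts_def)
  have d: "adiff m u v = (snd v + m - snd u) mod m" by (simp add: adiff_def)
  have "adiff m u v \<le> 3" using a m by (auto simp: arc_def adiff_def)
  then show ?thesis
    using d u v by (cases "snd u \<le> snd v") (auto simp: le_mod_geq)
qed

lemma snd_last_eq_walk_weight:
  "3 < m \<Longrightarrow> is_walk m P \<Longrightarrow> \<forall>v\<in>set (butlast P). snd v + 3 < m \<Longrightarrow> P \<noteq> [] \<Longrightarrow>
     snd (last P) = snd (hd P) + walk_weight m P"
proof (induction m P rule: walk_weight.induct)
  case (1 m u v P)
  then show ?case using snd_arc_no_wrap[of m u v] by simp
qed simp_all

lemma closed_type_cycle_of_closed_walk:
  assumes m: "0 < m" and walk: "is_walk m C" and len: "length C = Suc m"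
    and dist: "distinct (butlast C)" and C: "set C \<subseteq> verts m" and closed: "last C = hd C"
    and weight: "walk_weight m C = t * m"
  shows "closed_type_cycle m t C"
proof -
  let ?B = "butlast C"
  have C_ne: "C \<noteq> []" using len by auto
  have succ: "?B ! (Suc i mod m) = C ! Suc i" if i: "i < m" for i
  proof (cases "Suc i < m")
    case True
    then show ?thesis using len by (simp add: nth_butlast)
  next
    case False
    then have "Suc i = m" using i by simp
    moreover have "?B ! 0 = C ! m"
      using m len closed C_ne by (simp add: nth_butlast hd_conv_nth last_conv_nth)
    ultimately show ?thesis by simp
  qed
  have cur: "?B ! i = C ! i" if "i < m" for i
    using that len by (simp add: nth_butlast)
  have arcs: "\<forall>i<m. arc m (?B ! i) (?B ! ((i + 1) mod m))"
    using walk len unfolding is_walk_iff_nth by (simp add: succ del: nth_butlast) (simp add: cur)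
  have "(\<Sum>i<m. adiff m (?B ! i) (?B ! ((i + 1) mod m))) = walk_weight m C"
    using len unfolding walk_weight_eq_sum
    by (intro sum.cong) (simp_all add: succ del: nth_butlast, simp add: cur)
  moreover have "set ?B \<subseteq> verts m" using C by (meson in_set_butlastD subset_iff)
  ultimately show ?thesis
    unfolding closed_type_cycle_def type_cycle_def dicycle_def
    using C_ne closed len dist arcs weight by simp
qed

lemma dicycle_butlast: "closed_type_cycle m t C \<Longrightarrow> dicycle m (butlast C)"
  by (simp add: closed_type_cycle_def type_cycle_def)

lemma Cm_factor_pair:
  assumes C0: "dicycle m C0" and C1: "dicycle m C1" and disj: "set C0 \<inter> set C1 = {}"
  shows "Cm_factor m [C0, C1]"
proof -
  have fin: "finite (verts m)" and card: "card (verts m) = 2 * m"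
  proof -
    have "verts m = UNIV \<times> {..<m}" by (auto simp: verts_def)
    then show "finite (verts m)" "card (verts m) = 2 * m" by (simp_all add: card_cartesian_product)
  qed
  have "card (set C0 \<union> set C1) = 2 * m"
    using C0 C1 disj by (simp add: dicycle_def card_Un_disjoint distinct_card)
  moreover have "set C0 \<union> set C1 \<subseteq> verts m" using C0 C1 by (simp add: dicycle_def)
  ultimately have "set C0 \<union> set C1 = verts m" using card_subset_eq[OF fin] card by simp
  moreover have "\<forall>i<2. \<forall>j<2. i \<noteq> j \<longrightarrow> set ([C0, C1] ! i) \<inter> set ([C0, C1] ! j) = {}"
    using disj by (auto simp: less_2_cases_iff)
  ultimately show ?thesis unfolding Cm_factor_def using C0 C1 by simp
qed

lemma butlast_disjoint: "set A \<inter> set B = {} \<Longrightarrow> set (butlast A) \<inter> set (butlast B) = {}"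
  by (auto dest: in_set_butlastD)

lemma V0_disjoint_above: "A \<subseteq> V0 p \<Longrightarrow> B \<subseteq> {v. p \<le> snd v} \<Longrightarrow> A \<inter> B = {}"
  by (fastforce simp: V0_def)

definition shifted_copies :: "nat \<Rightarrow> nat \<Rightarrow> vert list \<Rightarrow> vert list list" where
  "shifted_copies m k P = map (\<lambda>j. rhoP m (12 * int j) P) [0..<k]"

definition layers :: "nat \<Rightarrow> nat \<Rightarrow> vert list \<Rightarrow> vert list" where
  "layers m k P = map (\<lambda>(j, u). rho m (12 * int j) u) (List.product [0..<k] (butlast P))"

lemma shifted_copies_eq_Nil_iff [simp]: "shifted_copies m k P = [] \<longleftrightarrow> k = 0"
  by (simp add: shifted_copies_def)

lemma concat_butlast_shifted_copies: "concat (map butlast (shifted_copies m k P)) = layers m k P"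
  by (simp add: shifted_copies_def layers_def product_concat_map map_concat rhoP_def o_def map_butlast)

lemma length_layers: "length (layers m k P) = k * plen P"
  by (simp add: layers_def plen_def)

lemma last_rhoP_shift:
  "0 < m \<Longrightarrow> P \<noteq> [] \<Longrightarrow> last P = rho m 12 (hd P) \<Longrightarrow>
     last (rhoP m (12 * int j) P) = rho m (12 * int (Suc j)) (hd P)"
  by (simp add: rho_add algebra_simps)

lemma chain_shifted_copies:
  "0 < m \<Longrightarrow> P \<noteq> [] \<Longrightarrow> last P = rho m 12 (hd P) \<Longrightarrow> chain (shifted_copies m k P)"
  unfolding chain_def shifted_copies_def by (simp add: last_rhoP_shift del: last_rhoP)

lemma last_last_shifted_copies:
  "0 < m \<Longrightarrow> P \<noteq> [] \<Longrightarrow> last P = rho m 12 (hd P) \<Longrightarrow> 0 < k \<Longrightarrow>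
     last (last (shifted_copies m k P)) = rho m (12 * int k) (hd P)"
  using last_rhoP_shift[of m P "k - 1"] by (simp add: shifted_copies_def last_map del: last_rhoP)

lemma hd_hd_shifted_copies:
  "P \<noteq> [] \<Longrightarrow> hd P \<in> verts m \<Longrightarrow> 0 < k \<Longrightarrow> hd (hd (shifted_copies m k P)) = hd P"
  by (simp add: shifted_copies_def hd_map rho_zero upt_conv_Cons)

lemma walk_weight_shifted_copies:
  "0 < m \<Longrightarrow> set P \<subseteq> verts m \<Longrightarrow>
     sum_list (map (walk_weight m) (shifted_copies m k P)) = k * walk_weight m P"
  by (simp add: shifted_copies_def o_def walk_weight_rhoP sum_list_triv)

lemma rho_shift_band:
  "u \<in> Vi p 1 \<Longrightarrow> j < k \<Longrightarrow> p + 12 * k \<le> m \<Longrightarrow> rho m (12 * int j) u = (fst u, snd u + 12 * j)"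
  by (simp add: Vi_def rho_def)

lemma inj_on_shift_band:
  assumes "p + 12 * k \<le> m"
  shows "inj_on (\<lambda>(j, u). rho m (12 * int j) u) ({..<k} \<times> Vi p 1)"
proof (rule inj_onI, clarify)
  fix j u j' u'
  assume "j < k" "u \<in> Vi p 1" "j' < k" "u' \<in> Vi p 1" "rho m (12 * int j) u = rho m (12 * int j') u'"
  then have "fst u = fst u'" "snd u + 12 * j = snd u' + 12 * j'"
    "p \<le> snd u" "snd u \<le> p + 11" "p \<le> snd u'" "snd u' \<le> p + 11"
    using rho_shift_band[OF _ _ assms] by (auto simp: Vi_def)
  moreover from this have "j = j'"
    by (cases j j' rule: linorder_cases) linarith+
  ultimately show "j = j' \<and> u = u'" by (simp add: prod_eq_iff)
qed

lemma set_layers: "set (layers m k P) = (\<lambda>(j, u). rho m (12 * int j) u) ` ({..<k} \<times> set (butlast P))"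
  by (simp add: layers_def lessThan_atLeast0)

lemma layers_above_band:
  assumes "set (butlast P) \<subseteq> Vi p 1" "p + 12 * k \<le> m" "v \<in> set (layers m k P)"
  shows "p \<le> snd v"
proof -
  obtain j u where "j < k" "u \<in> Vi p 1" "v = rho m (12 * int j) u"
    using assms(1,3) by (auto simp: set_layers)
  then show ?thesis using rho_shift_band[OF _ _ assms(2)] by (simp add: Vi_def)
qed

lemma distinct_layers:
  "distinct (butlast P) \<Longrightarrow> set (butlast P) \<subseteq> Vi p 1 \<Longrightarrow> p + 12 * k \<le> m \<Longrightarrow> distinct (layers m k P)"
  unfolding layers_def distinct_map
  by (simp add: distinct_product lessThan_atLeast0[symmetric] inj_on_subset[OF inj_on_shift_band] Sigma_mono)

lemma layers_disjoint:
  assumes "set (butlast P) \<inter> set (butlast R) = {}" "set (butlast P) \<subseteq> Vi p 1" "set (butlast R) \<subseteq> Vi p 1"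
    and "p + 12 * k \<le> m"
  shows "set (layers m k P) \<inter> set (layers m k R) = {}"
proof -
  have "set (layers m k P) \<inter> set (layers m k R) =
      (\<lambda>(j, u). rho m (12 * int j) u) ` ({..<k} \<times> set (butlast P) \<inter> {..<k} \<times> set (butlast R))"
    unfolding set_layers
    by (rule inj_on_image_Int[OF inj_on_shift_band[OF assms(4)], symmetric]) (use assms in auto)
  then show ?thesis using assms(1) by auto
qed

lemma butlast_subset_band:
  "C6 m p P \<Longrightarrow> hd P \<in> Vi p 1 \<Longrightarrow> P \<noteq> [] \<Longrightarrow> set (butlast P) \<subseteq> Vi p 1"
  by (cases P) (auto simp: C6_def split: if_splits)

lemma C4_snd_last: "C4 m p W \<Longrightarrow> p + 3 \<le> m \<Longrightarrow> p \<le> snd (last W) \<and> snd (last W) \<le> p + 2"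
  by (auto simp: C4_def)

lemma walk_weight_band_segment:
  assumes p: "3 \<le> p" and m: "p + 12 \<le> m" and P: "dipath m P" and C6: "C6 m p P"
    and hd_lo: "p \<le> snd (hd P)" and hd_hi: "snd (hd P) \<le> p + 2"
  shows "walk_weight m P = 12"
proof -
  have m0: "0 < m" using m by simp
  have P_ne: "P \<noteq> []" and P_verts: "set P \<subseteq> verts m" and P_walk: "is_walk m P"
    using P by (simp_all add: dipath_iff_walk)
  have band: "set (butlast P) \<subseteq> Vi p 1"
    using butlast_subset_band[OF C6 _ P_ne] hd_lo hd_hi by (simp add: Vi_def)
  txt \<open>Translated by \<open>-p\<close>, the path no longer wraps around and its weight is its displacement.\<close>
  define P' where "P' = rhoP m (- int p) P"
  have snd_P': "snd (rho m (- int p) u) = snd u - p" if "p \<le> snd u" "snd u \<le> p + 11" for u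
    using that m snd_rho_no_wrap[of u "- int p" m] by simp
  have "\<forall>v\<in>set (butlast P'). snd v + 3 < m"
    using band m p by (auto simp: P'_def Vi_def snd_P')
  moreover have "is_walk m P'" "P' \<noteq> []"
    using is_walk_rhoP[OF m0 P_walk] P_ne by (simp_all add: P'_def)
  ultimately have "snd (last P') = snd (hd P') + walk_weight m P'"
    using snd_last_eq_walk_weight[of m P'] m p by simp
  moreover have "last P' = rho m (12 - int p) (hd P)"
    using C6 P_ne m0 by (simp add: P'_def C6_def rho_add)
  then have "snd (last P') = snd (hd P) + 12 - p"
    using hd_lo hd_hi m p snd_rho_no_wrap[of "hd P" "12 - int p" m] by simp
  moreover have "snd (hd P') = snd (hd P) - p"
    using P_ne hd_lo hd_hi by (simp add: P'_def snd_P')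
  moreover have "walk_weight m P' = walk_weight m P"
    using walk_weight_rhoP[OF m0 P_verts] by (simp add: P'_def)
  ultimately show ?thesis using hd_lo by linarith
qed

definition cycle_pieces ::
    "nat \<Rightarrow> nat \<Rightarrow> vert list \<Rightarrow> vert list \<Rightarrow> vert list \<Rightarrow> vert list \<Rightarrow> vert list list" where
  "cycle_pieces m k W P X R = [W] @ shifted_copies m k P @ [X] @ shifted_copies m k R"

text \<open>One half of a type-2 basic set with \<open>k \<ge> 1\<close>: \<open>W, X, P, R\<close> stand for \<open>W, X, P\<^sup>0\<^sub>0, P\<^sup>1\<^sub>0\<close>
  (or \<open>Y, Z, Q\<^sup>0\<^sub>0, Q\<^sup>1\<^sub>0\<close>), which generate the cycle \<open>C\<^sup>0\<close> (or \<open>C\<^sup>1\<close>).\<close>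

locale basic_half =
  fixes m p k :: nat and W X P R :: "vert list"
  assumes p_ge: "3 \<le> p" and k_pos: "0 < k" and m_eq: "m = p + 12 * k"
    and dipath_W: "dipath m W" and dipath_X: "dipath m X"
    and dipath_P: "dipath m P" and dipath_R: "dipath m R"
    and disj_WX: "set W \<inter> set X = {}" and disj_PR: "set P \<inter> set R = {}"
    and hd_X: "hd X = rho m (- int p) (last W)" and hd_W: "hd W = rho m (- int p) (last X)"
    and plen_WX: "plen W + plen X = p" and plen_PR: "plen P + plen R = 12"
    and C4_W: "C4 m p W" and C4_X: "C4 m p X"
    and last_W: "last W = hd P" and last_X: "last X = hd R"
    and C6_P: "C6 m p P" and C6_R: "C6 m p R"
begin

abbreviation "pieces \<equiv> cycle_pieces m k W P X R"
abbreviation "cycle \<equiv> concat_walk pieces"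

lemma m_pos: "0 < m" and band_fits: "p + 12 \<le> m"
  using m_eq k_pos by auto

lemma hd_P_band: "p \<le> snd (hd P) \<and> snd (hd P) \<le> p + 2"
  and hd_R_band: "p \<le> snd (hd R) \<and> snd (hd R) \<le> p + 2"
  using C4_snd_last[OF C4_W] C4_snd_last[OF C4_X] band_fits last_W last_X by auto

lemma butlast_P_band: "set (butlast P) \<subseteq> Vi p 1"
  and butlast_R_band: "set (butlast R) \<subseteq> Vi p 1"
  using butlast_subset_band[OF C6_P] butlast_subset_band[OF C6_R] hd_P_band hd_R_band
    dipath_P dipath_R by (auto simp: Vi_def dipath_def)

lemma butlast_W_low: "set (butlast W) \<subseteq> V0 p"
  and butlast_X_low: "set (butlast X) \<subseteq> V0 p"
  using C4_W C4_X by (simp_all add: C4_def)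

lemma rho_12k: "rho m (12 * int k) v = rho m (- int p) v"
proof -
  have "12 * int k = - int p + int m" using m_eq by simp
  then show ?thesis by (intro rho_mod_cong) simp
qed

lemma layers_high: "set (layers m k P) \<union> set (layers m k R) \<subseteq> {v. p \<le> snd v}"
  using layers_above_band butlast_P_band butlast_R_band m_eq by fastforce

lemma pieces_nonempty: "[] \<notin> set pieces"
  using dipath_W dipath_X dipath_P dipath_R
  by (auto simp: cycle_pieces_def shifted_copies_def dipath_def rhoP_def)

lemma chain_pieces: "chain pieces"
proof -
  have "hd P \<in> verts m" "hd R \<in> verts m"
    using dipath_P dipath_R by (auto simp: dipath_def)
  then show ?thesis
    using dipath_P dipath_R C6_P C6_R k_pos m_pos last_W last_X hd_X
    unfolding cycle_pieces_def
    by (auto simp: chain_append chain_Cons chain_shifted_copies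
        last_last_shifted_copies hd_hd_shifted_copies dipath_def C6_def rho_12k)
qed

lemma cycle_eq: "cycle = butlast W @ layers m k P @ butlast X @ layers m k R @ [hd W]"
proof -
  have "last R = rho m 12 (hd R)" "R \<noteq> []"
    using C6_R dipath_R by (simp_all add: C6_def dipath_def)
  then have "last (last pieces) = hd W"
    using last_last_shifted_copies[of m R k] m_pos k_pos hd_W last_X rho_12k
    by (simp add: cycle_pieces_def)
  then show ?thesis
    using concat_walk_eq_butlasts[OF chain_pieces pieces_nonempty]
    by (simp add: cycle_pieces_def concat_butlast_shifted_copies)
qed

lemma butlast_cycle: "butlast cycle = butlast W @ layers m k P @ butlast X @ layers m k R"
  unfolding cycle_eq by (metis append.assoc butlast_snoc)

lemma last_cycle: "last cycle = hd cycle"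
proof -
  have "hd cycle = hd W"
    using dipath_W by (simp add: cycle_pieces_def dipath_def)
  then show ?thesis by (simp add: cycle_eq)
qed

lemma length_cycle: "length cycle = Suc m"
proof -
  have "k * plen P + k * plen R = 12 * k"
    using plen_PR by (metis add_mult_distrib2 mult.commute)
  then show ?thesis
    using plen_WX m_eq unfolding cycle_eq by (simp add: length_layers plen_def)
qed

lemma distinct_butlast_cycle: "distinct (butlast cycle)"
proof -
  have "distinct (layers m k P)" "distinct (layers m k R)"
    using distinct_layers butlast_P_band butlast_R_band dipath_P dipath_R m_eq
    by (simp_all add: dipath_def distinct_butlast)
  moreover have "set (layers m k P) \<inter> set (layers m k R) = {}"
    using layers_disjoint[OF butlast_disjoint[OF disj_PR] butlast_P_band butlast_R_band] m_eq by simp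
  moreover have "set (butlast W) \<inter> set (butlast X) = {}"
    using butlast_disjoint[OF disj_WX] .
  moreover have "distinct (butlast W)" "distinct (butlast X)"
    using dipath_W dipath_X by (simp_all add: dipath_def distinct_butlast)
  moreover have "(set (butlast W) \<union> set (butlast X)) \<inter> (set (layers m k P) \<union> set (layers m k R)) = {}"
    using butlast_W_low butlast_X_low layers_high by (intro V0_disjoint_above) auto
  ultimately show ?thesis
    unfolding butlast_cycle distinct_append set_append by blast
qed

lemma cycle_in_verts: "set cycle \<subseteq> verts m"
proof -
  have "\<forall>Q\<in>set pieces. set Q \<subseteq> verts m"
    using dipath_W dipath_X dipath_P dipath_R rho_in_verts[OF m_pos]
    by (auto simp: cycle_pieces_def shifted_copies_def dipath_def)
  then show ?thesis using set_concat_walk_subset[of pieces] by blast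
qed

lemma is_walk_cycle: "is_walk m cycle"
  using is_walk_concat_walk[OF chain_pieces pieces_nonempty] is_walk_rhoP[OF m_pos]
    dipath_W dipath_X dipath_P dipath_R
  by (auto simp: cycle_pieces_def shifted_copies_def dipath_iff_walk)

lemma walk_weight_W_X: "walk_weight m W + walk_weight m X = 2 * p"
proof -
  have low: "\<forall>v\<in>set (butlast W) \<union> set (butlast X). snd v + 3 < m"
    using butlast_W_low butlast_X_low band_fits by (auto simp: V0_def)
  have "snd (last W) = snd (hd W) + walk_weight m W" "snd (last X) = snd (hd X) + walk_weight m X"
    using snd_last_eq_walk_weight low band_fits dipath_W dipath_X by (simp_all add: dipath_iff_walk)
  moreover have "snd (hd X) = snd (last W) - p" "snd (hd W) = snd (last X) - p"
    using hd_X hd_W snd_rho_no_wrap[of "last W" "- int p" m] snd_rho_no_wrap[of "last X" "- int p" m]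
      hd_P_band hd_R_band last_W last_X band_fits by simp_all
  moreover have "p \<le> snd (last W)" "p \<le> snd (last X)"
    using hd_P_band hd_R_band last_W last_X by simp_all
  ultimately show ?thesis by linarith
qed

lemma walk_weight_cycle: "walk_weight m cycle = 2 * m"
proof -
  have "walk_weight m P = 12" "walk_weight m R = 12"
    using walk_weight_band_segment p_ge band_fits dipath_P dipath_R C6_P C6_R hd_P_band hd_R_band
    by simp_all
  then show ?thesis
    using walk_weight_concat_walk[OF chain_pieces pieces_nonempty] walk_weight_shifted_copies[OF m_pos]
      walk_weight_W_X dipath_P dipath_R m_eq
    by (simp add: cycle_pieces_def dipath_def)
qed

lemma closed_type_cycle: "closed_type_cycle m 2 cycle"
  using closed_type_cycle_of_closed_walk[OF m_pos is_walk_cycle length_cycle distinct_butlast_cycle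
      cycle_in_verts last_cycle] walk_weight_cycle
  by simp

end

lemma type2_basic_halves:
  assumes "type2_basic m p k W X Y Z P R Q S" "0 < k" "3 \<le> p" "m = p + 12 * k"
  shows "basic_half m p k W X P R" "basic_half m p k Y Z Q S"
  using assms by (simp_all add: type2_basic_def basic_half_def disj4_def)

lemma type2_basic_closes_without_layers:
  assumes "type2_basic p p 0 W X Y Z P R Q S"
  shows "last W = hd X" "last Y = hd Z"
proof -
  have no_shift: "rho p (- int p) v = v" if "v \<in> verts p" for v
    using rho_mod_cong[of "- int p" p 0] rho_zero[OF that] by simp
  have "dipath p W" "dipath p Y" "hd X = rho p (- int p) (last W)" "hd Z = rho p (- int p) (last Y)"
    using assms by (simp_all add: type2_basic_def)
  moreover from this have "last W \<in> verts p" "last Y \<in> verts p"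
    by (auto simp: dipath_def)
  ultimately show "last W = hd X" "last Y = hd Z"
    using no_shift by simp_all
qed

lemma butlast_cycles_disjoint:
  assumes H0: "basic_half m p k W X P R" and H1: "basic_half m p k Y Z Q S"
    and WXYZ: "disj4 W X Y Z" and PRQS: "disj4 P R Q S"
  shows "set (butlast (concat_walk (cycle_pieces m k W P X R))) \<inter>
         set (butlast (concat_walk (cycle_pieces m k Y Q Z S))) = {}"
proof -
  interpret H0: basic_half m p k W X P R by (fact H0)
  interpret H1: basic_half m p k Y Z Q S by (fact H1)
  have fits: "p + 12 * k \<le> m" using H0.m_eq by simp
  have "(set (butlast W) \<union> set (butlast X)) \<inter> (set (butlast Y) \<union> set (butlast Z)) = {}"
    using WXYZ unfolding disj4_def by (blast dest: in_set_butlastD)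
  moreover have "set (layers m k A) \<inter> set (layers m k B) = {}" if "A \<in> {P, R}" "B \<in> {Q, S}" for A B
  proof (rule layers_disjoint[OF butlast_disjoint _ _ fits])
    show "set A \<inter> set B = {}" using PRQS that unfolding disj4_def by blast
    show "set (butlast A) \<subseteq> Vi p 1" "set (butlast B) \<subseteq> Vi p 1"
      using that H0.butlast_P_band H0.butlast_R_band H1.butlast_P_band H1.butlast_R_band by auto
  qed
  moreover have "(set (butlast W) \<union> set (butlast X)) \<inter> (set (layers m k Q) \<union> set (layers m k S)) = {}"
    using H0.butlast_W_low H0.butlast_X_low H1.layers_high by (intro V0_disjoint_above) auto
  moreover have "(set (layers m k P) \<union> set (layers m k R)) \<inter> (set (butlast Y) \<union> set (butlast Z)) = {}"
    using H1.butlast_W_low H1.butlast_X_low H0.layers_high V0_disjoint_above by blast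
  ultimately show ?thesis
    unfolding H0.butlast_cycle H1.butlast_cycle set_append by auto
qed

theorem mainTheorem5:
  fixes m p k :: nat and W X Y Z P00 P10 Q00 Q10 :: "vert list"
  assumes "p \<in> {11, 13, 17, 19}"
    and "m = p + 12 * k"
    and "type2_basic m p k W X Y Z P00 P10 Q00 Q10"
  shows "let L0 = [W] @ map (\<lambda>j. rhoP m (12 * int j) P00) [0..<k] @ [X] @
                  map (\<lambda>j. rhoP m (12 * int j) P10) [0..<k];
             L1 = [Y] @ map (\<lambda>j. rhoP m (12 * int j) Q00) [0..<k] @ [Z] @
                  map (\<lambda>j. rhoP m (12 * int j) Q10) [0..<k];
             C0 = concat_walk L0; C1 = concat_walk L1
         in chain L0 \<and> chain L1 \<and>
            closed_type_cycle m 2 C0 \<and> closed_type_cycle m 2 C1 \<and>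
            Cm_factor m [butlast C0, butlast C1]"
proof (cases "k = 0")
  case True
  have cycles: "closed_type_cycle m 2 (W @ tl X)" "closed_type_cycle m 2 (Y @ tl Z)"
    "set (W @ tl X) \<inter> set (Y @ tl Z) = {}"
    using assms(3) True by (simp_all add: type2_basic_def)
  moreover have "last W = hd X" "last Y = hd Z"
    using type2_basic_closes_without_layers assms(2,3) True by simp_all
  ultimately show ?thesis
    using True Cm_factor_pair[OF cycles(1,2)[THEN dicycle_butlast] butlast_disjoint[OF cycles(3)]]
    by (simp add: chain_Cons)
next
  case False
  have "3 \<le> p" using assms(1) by auto
  then have H0: "basic_half m p k W X P00 P10" and H1: "basic_half m p k Y Z Q00 Q10"
    using type2_basic_halves assms(2,3) False by simp_all
  have disjoint: "disj4 W X Y Z" "disj4 P00 P10 Q00 Q10"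
    using assms(3) False by (simp_all add: type2_basic_def)
  note cycles = basic_half.closed_type_cycle[OF H0] basic_half.closed_type_cycle[OF H1]
  show ?thesis
    unfolding Let_def shifted_copies_def[symmetric] cycle_pieces_def[symmetric]
    using basic_half.chain_pieces[OF H0] basic_half.chain_pieces[OF H1] cycles
      Cm_factor_pair[OF cycles[THEN dicycle_butlast] butlast_cycles_disjoint[OF H0 H1 disjoint]]
    by simp
qed

end
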